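(* For every $j\in\mathbb Z$: (1) Every nontrivial coset of $\Phi^{j-1}_*\mathcal R$ is contained in $\{(x,y)\in\mathbb R^2: x\in m^{-j}\mathbb Z\setminus m^{-(j-1)}\mathbb Z\}$, and any two points of the same coset lie in a vertical edge path of $Y_j$ of combinatorial length at most $2$. (2) Every coset of $\mathcal R_j$ is contained in an orbit of the translation action of $m^{-j}\mathbb Z\times m_v^{-j}\mathbb Z$ on $\mathbb R^2$. (3) Let $\bar{\mathcal R}_{j+1}$ be the equivalence relation on $X_j$ generated by the pushforward $(\hat\pi^j\circ\Phi^j)_*\mathcal R$. Then the cosets of $\bar{\mathcal R}_{j+1}$ are exactly the fibers of $\pi_j:X_j\to X_{j+1}$. (4) For $i=0,1$ let $\hat\sigma_i$ be a cell of $Y_j$ and $\hat p_i$ an interior point of $\hat\sigma_i$. If $\hat p_0\sim_{\mathcal R_j}\hat p_1$, then there is a translation $t\in m^{-j}\mathbb Z\times m_v^{-j}\mathbb Z$ with $t(\hat\sigma_0)=\hat\sigma_1$ and $\hat q\sim_{\mathcal R_j}t(\hat q)$ for all $\hat q\in\hat\sigma_0$.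
   Context: Standing construction ($n=2$). Fix an integer $L\ge100$, $m=4$, $m_v=3L$. For $j\in\mathbb Z$, $Y_j$ is the cell complex on $\mathbb R^2$ given by the tiling by rectangles $[am^{-j},(a+1)m^{-j}]\times[bm_v^{-j},(b+1)m_v^{-j}]$, $a,b\in\mathbb Z$; a $1$-cell of $Y_j$ is horizontal if it is a translate of $[0,m^{-j}]\times\{0\}$ and vertical if it is a translate of $\{0\}\times[0,m_v^{-j}]$. Let $\Phi(x,y)=(m^{-1}x,m_v^{-1}y)$. For $k,\ell\in\mathbb Z$, $i\in\{1,2,3\}$, let $a_{k,\ell,i}=\{k+\tfrac i4\}\times[(3\ell+i-1)m_v^{-1},(3\ell+i)m_v^{-1}]$. $\mathcal R$ is the equivalence relation on $\mathbb R^2$ generated by $p\sim p+(0,m_v^{-1})$ for $p\in a_{k,\ell,i}$ (all $k,\ell,i$). For $j\in\mathbb Z$, $\Phi^j_*\mathcal R=\{(\Phi^jp,\Phi^jq):(p,q)\in\mathcal R\}$; $\mathcal R_j$ is the equivalence relation generated by $\Phi^i_*\mathcal R$ for all integers $i<j$, and $\mathcal R_\infty$ the one generated by all $\Phi^i_*\mathcal R$, $i\in\mathbb Z$. For $j\in\mathbb Z\cup\{\infty\}$, $X_j=\mathbb R^2/\mathcal R_j$ with the quotient topology, $\hat\pi^j:\mathbb R^2\to X_j$ the quotient map; for $i\le j$, $\pi_i^j:X_i\to X_j$ is the induced map, and $\pi_j=\pi_j^{j+1}$. *)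

theory Defs
  imports "HOL-Analysis.Analysis"
begin

text \<open>Standing construction, n = 2, m = 4, m_v = 3L. Points of the plane are real \<times> real.\<close>

definition mv :: "int \<Rightarrow> real" where
  "mv L = 3 * real_of_int L"

text \<open>Mesh sizes of Y_j: horizontal m^{-j}, vertical m_v^{-j}.\<close>
definition hx :: "int \<Rightarrow> real" where
  "hx j = (4::real) powi (- j)"

definition hy :: "int \<Rightarrow> int \<Rightarrow> real" where
  "hy L j = mv L powi (- j)"

definition Phi_pow :: "int \<Rightarrow> int \<Rightarrow> real \<times> real \<Rightarrow> real \<times> real" where
  "Phi_pow L j p = (hx j * fst p, hy L j * snd p)"

definition a_seg :: "int \<Rightarrow> int \<Rightarrow> int \<Rightarrow> int \<Rightarrow> (real \<times> real) set" where
  "a_seg L k l i = {real_of_int k + real_of_int i / 4} \<times>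
     {real_of_int (3*l + i - 1) / mv L .. real_of_int (3*l + i) / mv L}"

definition R_gen :: "int \<Rightarrow> ((real \<times> real) \<times> (real \<times> real)) set" where
  "R_gen L = {(p, p + (0, 1 / mv L)) | p. \<exists>k l i. i \<in> {1,2,3} \<and> p \<in> a_seg L k l i}"

definition eqgen :: "('a \<times> 'a) set \<Rightarrow> ('a \<times> 'a) set" where
  "eqgen S = (S \<union> S\<inverse>)\<^sup>*"

definition R_base :: "int \<Rightarrow> ((real \<times> real) \<times> (real \<times> real)) set" where
  "R_base L = eqgen (R_gen L)"

definition push :: "('a \<Rightarrow> 'b) \<Rightarrow> ('a \<times> 'a) set \<Rightarrow> ('b \<times> 'b) set" where
  "push f S = {(f p, f q) | p q. (p, q) \<in> S}"

definition R_lev :: "int \<Rightarrow> int \<Rightarrow> ((real \<times> real) \<times> (real \<times> real)) set" where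
  "R_lev L j = eqgen (\<Union>i\<in>{i. i < j}. push (Phi_pow L i) (R_base L))"

definition R_inf :: "int \<Rightarrow> ((real \<times> real) \<times> (real \<times> real)) set" where
  "R_inf L = eqgen (\<Union>i. push (Phi_pow L i) (R_base L))"

definition X :: "int \<Rightarrow> int \<Rightarrow> (real \<times> real) set set" where
  "X L j = UNIV // R_lev L j"

definition hatpi :: "int \<Rightarrow> int \<Rightarrow> real \<times> real \<Rightarrow> (real \<times> real) set" where
  "hatpi L j p = R_lev L j `` {p}"

definition pi_map :: "int \<Rightarrow> int \<Rightarrow> (real \<times> real) set \<Rightarrow> (real \<times> real) set" where
  "pi_map L j c = R_lev L (j + 1) `` c"

text \<open>Cells of Y_j: [a hx, (a+dx) hx] \<times> [b hy, (b+dy) hy] with dx, dy \<in> {0,1}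
  (vertices, horizontal/vertical edges, rectangles).\<close>
definition cell :: "int \<Rightarrow> int \<Rightarrow> int \<Rightarrow> int \<Rightarrow> int \<Rightarrow> int \<Rightarrow> (real \<times> real) set" where
  "cell L j a b dx dy =
     {real_of_int a * hx j .. real_of_int (a + dx) * hx j} \<times>
     {real_of_int b * hy L j .. real_of_int (b + dy) * hy L j}"

definition cells :: "int \<Rightarrow> int \<Rightarrow> (real \<times> real) set set" where
  "cells L j = {cell L j a b dx dy | a b dx dy. dx \<in> {0,1} \<and> dy \<in> {0,1}}"

text \<open>Vertical edge paths in Y_j, given by their vertex sequence (integer lattice
  coordinates); consecutive vertices are joined by a vertical 1-cell.
  Combinatorial length = number of edges = length vs - 1.\<close>
definition vpath :: "(int \<times> int) list \<Rightarrow> bool" where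
  "vpath vs \<longleftrightarrow> vs \<noteq> [] \<and>
     (\<forall>(u, w) \<in> set (zip vs (tl vs)). fst u = fst w \<and> \<bar>snd u - snd w\<bar> = 1)"

definition vpath_set :: "int \<Rightarrow> int \<Rightarrow> (int \<times> int) list \<Rightarrow> (real \<times> real) set" where
  "vpath_set L j vs = cell L j (fst (hd vs)) (snd (hd vs)) 0 0 \<union>
     \<Union> {cell L j (fst u) (min (snd u) (snd w)) 0 1 | u w. (u, w) \<in> set (zip vs (tl vs))}"

definition gridX :: "int \<Rightarrow> real set" where
  "gridX j = {real_of_int a * hx j | a. True}"

definition trans_lat :: "int \<Rightarrow> int \<Rightarrow> (real \<times> real) set" where
  "trans_lat L j = {(real_of_int s * hx j, real_of_int t * hy L j) | s t. True}"

end

theory Submission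
  imports Defs
begin

text \<open>
  Every generator of R_j is a vertical move p \<mapsto> p + (0, N m_v^{-j}), N = m_v^{j-i-1}, defined on a
  whole vertical segment of Y_j: \<open>\<Phi>\<^sup>i\<close> (i < j) maps a_{k,l,r} onto the column
  x = (4k+r) 4^{j-i-1} m^{-j} between two heights divisible by N m_v^{-j}. Hence classes of R_j lie in
  orbits of the translation lattice, and a move starting in the relative interior of a cell of Y_j
  (necessarily a vertex or vertical edge of that segment) carries the whole cell along; following a chain
  of moves from p_0 to p_1 translates \<open>\<sigma>\<^sub>0\<close> onto the cell containing p_1 in its interior,
  i.e. onto \<open>\<sigma>\<^sub>1\<close>. For i = j - 1 the segments are single edges in the columns 4k+r,
  0 < r < 4, which are not columns of Y_{j-1}, and a nontrivial class stays inside a two-edge segment. The fibre statement is a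
  general fact about quotients: on R_j-classes, the equivalence generated by the images of
  \<open>\<Phi>\<^sup>j\<^sub>* R\<close> is R_{j+1} = \<open>\<langle>\<close>R_j \<union> \<open>\<Phi>\<^sup>j\<^sub>* R\<rangle>\<close>.
\<close>

section \<open>Equivalence relations generated by a relation\<close>

lemma equiv_eqgen: "equiv UNIV (eqgen S)"
  unfolding eqgen_def
  by (intro equivI refl_rtrancl sym_rtrancl trans_rtrancl) (auto simp: sym_Un_converse)

lemma eqgen_increasing: "S \<subseteq> eqgen S"
  unfolding eqgen_def by auto

lemma eqgen_least:
  assumes "S \<subseteq> E" and "equiv UNIV E"
  shows "eqgen S \<subseteq> E"
proof
  fix p assume "p \<in> eqgen S"
  obtain x y where p: "p = (x, y)" by fastforce
  from \<open>p \<in> eqgen S\<close> have "(x, y) \<in> (S \<union> S\<inverse>)\<^sup>*"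
    unfolding eqgen_def p .
  then have "(x, y) \<in> E"
  proof (induction rule: rtrancl_induct)
    case base
    then show ?case using assms(2) by (simp add: equiv_def refl_on_def)
  next
    case (step y z)
    then show ?case using assms by (auto elim!: equivE elim: transE symE)
  qed
  with p show "p \<in> E" by simp
qed

lemma eqgen_mono: "S \<subseteq> T \<Longrightarrow> eqgen S \<subseteq> eqgen T"
  unfolding eqgen_def by (intro rtrancl_mono) blast

lemma equiv_inv_image: "equiv UNIV E \<Longrightarrow> equiv UNIV (inv_image E f)"
  by (auto simp: equiv_def refl_on_def intro: sym_inv_image trans_inv_image)

lemma equiv_Id_Un_Times: "equiv UNIV (Id \<union> A \<times> A)"
  unfolding equiv_def refl_on_def sym_def trans_def by blast

lemma push_mono: "S \<subseteq> T \<Longrightarrow> push f S \<subseteq> push f T"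
  unfolding push_def by blast

lemma push_eqgen_subset: "push f (eqgen S) \<subseteq> eqgen (push f S)"
proof -
  have "eqgen S \<subseteq> inv_image (eqgen (push f S)) f"
  proof (rule eqgen_least[OF _ equiv_inv_image[OF equiv_eqgen]], rule subrelI)
    fix a b assume "(a, b) \<in> S"
    then have "(f a, f b) \<in> push f S" by (auto simp: push_def)
    then show "(a, b) \<in> inv_image (eqgen (push f S)) f" using eqgen_increasing by auto
  qed
  then show ?thesis by (auto simp: push_def)
qed

lemma eqgen_Image_subset_if_closed:
  assumes "x \<in> A" and "\<And>y z. y \<in> A \<Longrightarrow> (y, z) \<in> S \<union> S\<inverse> \<Longrightarrow> z \<in> A"
  shows "eqgen S `` {x} \<subseteq> A"
proof
  fix z assume "z \<in> eqgen S `` {x}"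
  then have "(x, z) \<in> (S \<union> S\<inverse>)\<^sup>*" by (simp add: eqgen_def)
  then show "z \<in> A"
    by (induction rule: rtrancl_induct) (use assms in blast)+
qed

lemma eqgen_subset_difference_in_subgroup:
  fixes S :: "('a::ab_group_add \<times> 'a) set"
  assumes "S \<subseteq> {(p, q). q - p \<in> G}" and "0 \<in> G"
    and "\<And>a b. a \<in> G \<Longrightarrow> b \<in> G \<Longrightarrow> a + b \<in> G" and "\<And>a. a \<in> G \<Longrightarrow> - a \<in> G"
  shows "eqgen S \<subseteq> {(p, q). q - p \<in> G}"
proof (rule eqgen_least[OF assms(1)], rule equivI)
  show "refl_on UNIV {(p, q). q - p \<in> G}"
    using assms(2) by (simp add: refl_on_def)
  show "sym {(p, q). q - p \<in> G}"
  proof (rule symI)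
    fix p q assume "(p, q) \<in> {(p, q). q - p \<in> G}"
    then show "(q, p) \<in> {(p, q). q - p \<in> G}" using assms(4)[of "q - p"] by simp
  qed
  show "trans {(p, q). q - p \<in> G}"
  proof (rule transI)
    fix p q r assume "(p, q) \<in> {(p, q). q - p \<in> G}" "(q, r) \<in> {(p, q). q - p \<in> G}"
    then show "(p, r) \<in> {(p, q). q - p \<in> G}" using assms(3)[of "q - p" "r - q"] by simp
  qed
qed simp

lemma eqgen_quotient_classes_eq_fibres:
  fixes S T :: "'a rel"
  assumes E_def: "E = eqgen S" and E'_def: "E' = eqgen (S \<union> T)"
  shows "{eqgen {(E `` {x}, E `` {y}) | x y. (x, y) \<in> T} `` {c} | c. c \<in> UNIV // E} =
    {{c \<in> UNIV // E. E' `` c = z} | z. z \<in> UNIV // E'}"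
proof -
  define Q where "Q = eqgen {(E `` {x}, E `` {y}) | x y. (x, y) \<in> T}"
  have E: "equiv UNIV E" and E': "equiv UNIV E'"
    unfolding E_def E'_def by (rule equiv_eqgen)+
  have "E \<subseteq> E'" unfolding E_def E'_def by (rule eqgen_mono) blast
  then have E'_E: "E' `` (E `` {x}) = E' `` {x}" for x
    using E E' by (auto elim!: equivE intro: refl_onD dest: transD)
  have Q_iff: "(E `` {x}, E `` {y}) \<in> Q \<longleftrightarrow> (x, y) \<in> E'" for x y
  proof
    have "Q \<subseteq> kernel (\<lambda>c. E' `` c)"
      unfolding Q_def
    proof (rule eqgen_least[OF _ equiv_kernel], rule subrelI)
      fix c d assume "(c, d) \<in> {(E `` {x}, E `` {y}) | x y. (x, y) \<in> T}"
      then obtain x y where "c = E `` {x}" "d = E `` {y}" "(x, y) \<in> E'"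
        unfolding E'_def eqgen_def by blast
      then show "(c, d) \<in> kernel (\<lambda>c. E' `` c)"
        using E' by (simp add: kernel_def E'_E equiv_class_eq)
    qed
    moreover assume "(E `` {x}, E `` {y}) \<in> Q"
    ultimately have "(E `` {x}, E `` {y}) \<in> kernel (\<lambda>c. E' `` c)" by blast
    then have "E' `` {x} = E' `` {y}" by (simp add: kernel_def E'_E)
    then show "(x, y) \<in> E'" using eq_equiv_class_iff[OF E'] by blast
  next
    have "E' \<subseteq> inv_image Q (\<lambda>x. E `` {x})"
      unfolding E'_def
    proof (rule eqgen_least[OF _ equiv_inv_image], rule subrelI)
      fix x y assume "(x, y) \<in> S \<union> T"
      then show "(x, y) \<in> inv_image Q (\<lambda>x. E `` {x})"
      proof
        assume "(x, y) \<in> S"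
        then have "(x, y) \<in> E" unfolding E_def using eqgen_increasing by blast
        then have "E `` {x} = E `` {y}" using E by (rule equiv_class_eq[rotated])
        then show ?thesis by (simp add: Q_def eqgen_def)
      qed (auto simp: Q_def intro!: eqgen_increasing[THEN subsetD])
    qed (simp add: Q_def equiv_eqgen)
    moreover assume "(x, y) \<in> E'"
    ultimately show "(E `` {x}, E `` {y}) \<in> Q" by auto
  qed
  have Q_quotient: "Q \<subseteq> Id \<union> (UNIV // E) \<times> (UNIV // E)"
    unfolding Q_def by (rule eqgen_least[OF _ equiv_Id_Un_Times]) (auto intro: quotientI)
  have fibre: "Q `` {E `` {x}} = {c \<in> UNIV // E. E' `` c = E' `` {x}}" for x
  proof (intro equalityI subsetI)
    fix c assume c: "c \<in> Q `` {E `` {x}}"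
    then have "c \<in> UNIV // E" using Q_quotient by (auto intro: quotientI)
    then obtain y where y: "c = E `` {y}" by (auto elim: quotientE)
    with c Q_iff have "(x, y) \<in> E'" by simp
    then show "c \<in> {c \<in> UNIV // E. E' `` c = E' `` {x}}"
      using \<open>c \<in> UNIV // E\<close> y E' by (simp add: E'_E equiv_class_eq)
  next
    fix c assume c: "c \<in> {c \<in> UNIV // E. E' `` c = E' `` {x}}"
    then obtain y where y: "c = E `` {y}" by (auto elim: quotientE)
    with c have "(y, x) \<in> E'" using E' by (simp add: E'_E eq_equiv_class_iff)
    then have "(x, y) \<in> E'" using E' by (blast elim: equivE symE)
    then show "c \<in> Q `` {E `` {x}}" using y Q_iff by simp
  qed
  have "{Q `` {c} | c. c \<in> UNIV // E} = range (\<lambda>x. Q `` {E `` {x}})"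
    by (auto simp: quotient_def)
  also have "\<dots> = range (\<lambda>x. {c \<in> UNIV // E. E' `` c = E' `` {x}})"
    by (simp only: fibre)
  also have "\<dots> = {{c \<in> UNIV // E. E' `` c = z} | z. z \<in> UNIV // E'}"
    by (auto simp: quotient_def[of UNIV E'])
  finally show ?thesis unfolding Q_def .
qed

section \<open>The generating moves of R_j\<close>

lemma hx_pos: "0 < hx j"
  by (simp add: hx_def)

lemma hy_pos: "0 < L \<Longrightarrow> 0 < hy L j"
  by (simp add: hy_def mv_def)

lemma powi_level:
  fixes c :: real
  assumes "c \<noteq> 0" "i < j"
  shows "c powi (- i) = c * c ^ nat (j - i - 1) * c powi (- j)"
proof -
  have "c powi (- i) = c powi ((j - i) + (- j))" by simp
  also have "\<dots> = c powi (j - i) * c powi (- j)"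
    using assms(1) by (subst power_int_add) auto
  also have "c powi (j - i) = c ^ nat (j - i)"
    using assms(2) by (simp add: power_int_def)
  also have "\<dots> = c * c ^ nat (j - i - 1)"
    using assms(2) by (simp flip: power_Suc add: Suc_nat_eq_nat_zadd1)
  finally show ?thesis .
qed

lemma hx_level: "i < j \<Longrightarrow> hx i = 4 * real_of_int (4 ^ nat (j - i - 1)) * hx j"
  unfolding hx_def by (simp add: powi_level)

lemma hy_level:
  "0 < L \<Longrightarrow> i < j \<Longrightarrow> hy L i = mv L * real_of_int ((3 * L) ^ nat (j - i - 1)) * hy L j"
  unfolding hy_def by (simp add: powi_level mv_def)

lemma Phi_pow_image_a_seg:
  assumes "0 < L" "i < j"
  defines "N \<equiv> (3 * L) ^ nat (j - i - 1)"
  shows "Phi_pow L i ` a_seg L k l r =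
    cell L j ((4 * k + r) * 4 ^ nat (j - i - 1)) ((3 * l + r - 1) * N) 0 N"
proof -
  have mv: "0 < mv L" using assms(1) by (simp add: mv_def)
  have Phi: "Phi_pow L i = map_prod ((*) (hx i)) ((*) (hy L i))"
    by (simp add: Phi_pow_def fun_eq_iff)
  have x: "hx i * (real_of_int k + real_of_int r / 4) = real_of_int ((4 * k + r) * 4 ^ nat (j - i - 1)) * hx j"
    using hx_level[OF assms(2)] by (simp add: field_simps)
  have y: "hy L i * (real_of_int c / mv L) = real_of_int (c * N) * hy L j" for c
    using hy_level[OF assms(1,2)] mv by (simp add: N_def field_simps)
  have "Phi_pow L i ` a_seg L k l r =
      {hx i * (real_of_int k + real_of_int r / 4)} \<times>
      {hy L i * (real_of_int (3 * l + r - 1) / mv L) .. hy L i * (real_of_int (3 * l + r) / mv L)}"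
    unfolding Phi a_seg_def using hy_pos[OF assms(1), of i] by (intro map_prod_surj_on) auto
  also have "\<dots> = cell L j ((4 * k + r) * 4 ^ nat (j - i - 1)) ((3 * l + r - 1) * N) 0 N"
    unfolding x y cell_def by (simp add: algebra_simps)
  finally show ?thesis .
qed

lemma Phi_pow_vertical_step:
  assumes "0 < L" "i < j"
  shows "Phi_pow L i (p + (0, 1 / mv L)) = Phi_pow L i p + (0, real_of_int ((3 * L) ^ nat (j - i - 1)) * hy L j)"
  using hy_level[OF assms] assms(1) by (simp add: Phi_pow_def distrib_left mv_def)

lemma push_Phi_pow_R_gen:
  assumes "0 < L" "i < j"
  defines "N \<equiv> (3 * L) ^ nat (j - i - 1)"
  shows "push (Phi_pow L i) (R_gen L) = {(y, y + (0, real_of_int N * hy L j)) | y.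
    \<exists>k l r. r \<in> {1, 2, 3} \<and> y \<in> cell L j ((4 * k + r) * 4 ^ nat (j - i - 1)) ((3 * l + r - 1) * N) 0 N}"
  unfolding push_def R_gen_def N_def Phi_pow_image_a_seg[OF assms(1,2), symmetric]
  using Phi_pow_vertical_step[OF assms(1,2)] by fastforce

definition R_lev_moves :: "int \<Rightarrow> int \<Rightarrow> ((real \<times> real) \<times> (real \<times> real)) set" where
  "R_lev_moves L j = (\<Union>i\<in>{i. i < j}. push (Phi_pow L i) (R_gen L))"

lemma R_lev_eq_eqgen_moves: "R_lev L j = eqgen (R_lev_moves L j)"
proof
  show "R_lev L j \<subseteq> eqgen (R_lev_moves L j)"
    unfolding R_lev_def R_base_def
  proof (intro eqgen_least UN_least equiv_eqgen)
    fix i assume "i \<in> {i. i < j}"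
    then have "push (Phi_pow L i) (R_gen L) \<subseteq> R_lev_moves L j"
      by (auto simp: R_lev_moves_def)
    then show "push (Phi_pow L i) (eqgen (R_gen L)) \<subseteq> eqgen (R_lev_moves L j)"
      using push_eqgen_subset eqgen_mono by blast
  qed
  show "eqgen (R_lev_moves L j) \<subseteq> R_lev L j"
    unfolding R_lev_def R_base_def R_lev_moves_def
    by (intro eqgen_mono UN_mono push_mono eqgen_increasing order_refl)
qed

lemma R_lev_moves_subset: "R_lev_moves L j \<subseteq> R_lev L j"
  unfolding R_lev_eq_eqgen_moves by (rule eqgen_increasing)

lemma R_lev_refl: "(p, p) \<in> R_lev L j"
  by (simp add: R_lev_def eqgen_def)

lemma R_lev_sym: "(p, q) \<in> R_lev L j \<Longrightarrow> (q, p) \<in> R_lev L j"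
  unfolding R_lev_def eqgen_def by (rule symD[OF sym_rtrancl[OF sym_Un_converse]])

lemma R_lev_trans: "(p, q) \<in> R_lev L j \<Longrightarrow> (q, r) \<in> R_lev L j \<Longrightarrow> (p, r) \<in> R_lev L j"
  unfolding R_lev_def eqgen_def by (rule rtrancl_trans)

lemma R_lev_moves_vertical:
  assumes "0 < L" and "(y, z) \<in> R_lev_moves L j"
  shows "\<exists>A C N. y \<in> cell L j A C 0 N \<and> z = y + (0, real_of_int N * hy L j) \<and>
    (\<forall>q \<in> cell L j A C 0 N. (q, q + (0, real_of_int N * hy L j)) \<in> R_lev_moves L j)"
proof -
  from assms(2) obtain i where i: "i < j" and yz: "(y, z) \<in> push (Phi_pow L i) (R_gen L)"
    by (auto simp: R_lev_moves_def)
  define N where "N = (3 * L) ^ nat (j - i - 1)"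
  have moves: "push (Phi_pow L i) (R_gen L) \<subseteq> R_lev_moves L j"
    using i by (auto simp: R_lev_moves_def)
  from yz obtain k l r where r: "r \<in> {1, 2, 3}"
    and y: "y \<in> cell L j ((4 * k + r) * 4 ^ nat (j - i - 1)) ((3 * l + r - 1) * N) 0 N"
    and z: "z = y + (0, real_of_int N * hy L j)"
    unfolding push_Phi_pow_R_gen[OF assms(1) i] N_def by blast
  moreover have "(q, q + (0, real_of_int N * hy L j)) \<in> R_lev_moves L j"
    if "q \<in> cell L j ((4 * k + r) * 4 ^ nat (j - i - 1)) ((3 * l + r - 1) * N) 0 N" for q
  proof -
    from that r have "(q, q + (0, real_of_int N * hy L j)) \<in> push (Phi_pow L i) (R_gen L)"
      unfolding push_Phi_pow_R_gen[OF assms(1) i] N_def by blast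
    with moves show ?thesis ..
  qed
  ultimately show ?thesis by blast
qed

section \<open>Cells of Y_j\<close>

lemma mem_vertical_cell_iff:
  assumes "0 < L"
  shows "q \<in> cell L j A C 0 N \<longleftrightarrow>
    fst q = real_of_int A * hx j \<and> real_of_int C \<le> snd q / hy L j \<and> snd q / hy L j \<le> real_of_int (C + N)"
  using hy_pos[OF assms, of j] by (auto simp: cell_def mem_Times_iff pos_le_divide_eq pos_divide_le_eq)

lemma rel_interior_grid_interval:
  fixes h :: real
  assumes "0 < h" "d \<in> {0, 1}"
  shows "rel_interior {real_of_int a * h .. real_of_int (a + d) * h} =
    (if d = 0 then {real_of_int a * h} else {real_of_int a * h <..< real_of_int (a + 1) * h})"
  using assms by (auto simp: distrib_right)

lemma grid_interval_subset:
  fixes h :: real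
  assumes "0 < h" "d \<in> {0, 1}"
    and "x \<in> rel_interior {real_of_int a * h .. real_of_int (a + d) * h}"
    and "x \<in> {real_of_int A * h .. real_of_int B * h}"
  shows "{real_of_int a * h .. real_of_int (a + d) * h} \<subseteq> {real_of_int A * h .. real_of_int B * h}"
proof (cases "d = 0")
  case True
  then show ?thesis using assms by (simp add: rel_interior_grid_interval)
next
  case False
  with assms have d: "d = 1" and x: "real_of_int a * h < x" "x < real_of_int (a + 1) * h"
    by (auto simp: rel_interior_grid_interval)
  with assms(4) have "real_of_int A * h < real_of_int (a + 1) * h" "real_of_int a * h < real_of_int B * h"
    by auto
  then have "A \<le> a" "a + 1 \<le> B" using assms(1) by simp_all
  then show ?thesis using assms(1) d by (auto intro: order_trans)
qed

lemma rel_interior_cell: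
  "rel_interior (cell L j a b dx dy) =
    rel_interior {real_of_int a * hx j .. real_of_int (a + dx) * hx j} \<times>
    rel_interior {real_of_int b * hy L j .. real_of_int (b + dy) * hy L j}"
  unfolding cell_def by (intro rel_interior_Times convex_real_interval)

lemma cell_subset_if_rel_interior:
  assumes "0 < L" "dx \<in> {0, 1}" "dy \<in> {0, 1}"
    and "y \<in> rel_interior (cell L j a b dx dy)" "y \<in> cell L j A B w h"
  shows "cell L j a b dx dy \<subseteq> cell L j A B w h"
proof -
  from assms(4) have ri:
    "fst y \<in> rel_interior {real_of_int a * hx j .. real_of_int (a + dx) * hx j}"
    "snd y \<in> rel_interior {real_of_int b * hy L j .. real_of_int (b + dy) * hy L j}"
    unfolding rel_interior_cell by auto
  from assms(5) have mem:
    "fst y \<in> {real_of_int A * hx j .. real_of_int (A + w) * hx j}"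
    "snd y \<in> {real_of_int B * hy L j .. real_of_int (B + h) * hy L j}"
    unfolding cell_def by auto
  have
    "{real_of_int a * hx j .. real_of_int (a + dx) * hx j} \<subseteq> {real_of_int A * hx j .. real_of_int (A + w) * hx j}"
    "{real_of_int b * hy L j .. real_of_int (b + dy) * hy L j} \<subseteq> {real_of_int B * hy L j .. real_of_int (B + h) * hy L j}"
    using grid_interval_subset[OF hx_pos assms(2) ri(1) mem(1)]
      grid_interval_subset[OF hy_pos[OF assms(1)] assms(3) ri(2) mem(2)] .
  then show ?thesis unfolding cell_def by blast
qed

lemma cell_eq_if_rel_interior:
  assumes "0 < L" "dx \<in> {0, 1}" "dy \<in> {0, 1}" "dx' \<in> {0, 1}" "dy' \<in> {0, 1}"
    and "y \<in> rel_interior (cell L j a b dx dy)" "y \<in> rel_interior (cell L j a' b' dx' dy')"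
  shows "cell L j a b dx dy = cell L j a' b' dx' dy'"
proof -
  have "y \<in> cell L j a b dx dy" "y \<in> cell L j a' b' dx' dy'"
    using subsetD[OF rel_interior_subset assms(6)] subsetD[OF rel_interior_subset assms(7)] .
  with assms show ?thesis
    by (intro equalityI cell_subset_if_rel_interior[OF assms(1)])
qed

lemma cell_translate:
  "(\<lambda>q. (real_of_int n * hx j, real_of_int m * hy L j) + q) ` cell L j a b dx dy = cell L j (a + n) (b + m) dx dy"
proof -
  have translate: "(\<lambda>q. (real_of_int n * hx j, real_of_int m * hy L j) + q) =
      map_prod ((+) (real_of_int n * hx j)) ((+) (real_of_int m * hy L j))"
    by (simp add: fun_eq_iff)
  show ?thesis
    unfolding translate cell_def map_prod_surj_on[OF image_add_atLeastAtMost image_add_atLeastAtMost]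
    by (simp add: algebra_simps)
qed

lemma rel_interior_cell_translate:
  assumes "y \<in> rel_interior (cell L j a b dx dy)"
  shows "(real_of_int n * hx j, real_of_int m * hy L j) + y \<in> rel_interior (cell L j (a + n) (b + m) dx dy)"
  unfolding cell_translate[symmetric] rel_interior_translation using assms by (rule imageI)

lemma vertical_cell_subset_vpath_set:
  assumes "0 < L"
  shows "cell L j A C 0 2 \<subseteq> vpath_set L j [(A, C), (A, C + 1), (A, C + 2)]"
proof -
  have "cell L j A C 0 2 \<subseteq> cell L j A C 0 1 \<union> cell L j A (C + 1) 0 1"
    by (auto simp: mem_vertical_cell_iff[OF assms])
  moreover have "cell L j A C 0 1 \<union> cell L j A (C + 1) 0 1 \<subseteq> vpath_set L j [(A, C), (A, C + 1), (A, C + 2)]"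
    unfolding vpath_set_def by force
  ultimately show ?thesis by (rule order_trans)
qed

section \<open>Nontrivial classes of the pushforward to level j - 1\<close>

lemma push_Phi_pow_prev_R_gen:
  assumes "0 < L"
  shows "push (Phi_pow L (j - 1)) (R_gen L) =
    {(y, y + (0, hy L j)) | y. \<exists>k l r. r \<in> {1, 2, 3} \<and> y \<in> cell L j (4 * k + r) (3 * l + r - 1) 0 1}"
  using push_Phi_pow_R_gen[OF assms, of "j - 1" j] by simp

lemma int_le_if_between: "real_of_int a \<le> x \<Longrightarrow> x \<le> real_of_int b \<Longrightarrow> a \<le> b"
  by (metis of_int_le_iff order_trans)

lemma column_index_eq:
  fixes k k' r r' :: int
  assumes "4 * k + r = 4 * k' + r'" "r \<in> {1, 2, 3}" "r' \<in> {1, 2, 3}"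
  shows "r' = r"
  using assms(1) assms(2,3)[simplified] by presburger

text \<open>Segments a_{k,l,r} in the same column lie three edges apart, so a single move of
  \<open>\<Phi>\<^sup>j\<^sup>-\<^sup>1\<^sub>* R\<close> cannot leave the two-edge segment a_{k,l,r} \<union> (a_{k,l,r} + (0, m_v^{-j})).\<close>

lemma prev_move_preserves_segment:
  assumes L: "0 < L" and r: "r \<in> {1, 2, 3}" and y: "y \<in> cell L j (4 * k + r) (3 * l + r - 1) 0 2"
    and yz: "(y, z) \<in> push (Phi_pow L (j - 1)) (R_gen L) \<union> (push (Phi_pow L (j - 1)) (R_gen L))\<inverse>"
  shows "z \<in> cell L j (4 * k + r) (3 * l + r - 1) 0 2"
proof -
  let ?v = "(0, hy L j)"
  from yz obtain w k' l' r' where r': "r' \<in> {1, 2, 3}" and w: "w \<in> cell L j (4 * k' + r') (3 * l' + r' - 1) 0 1"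
    and cases: "y = w \<and> z = w + ?v \<or> z = w \<and> y = w + ?v"
    unfolding push_Phi_pow_prev_R_gen[OF L] by blast
  have hy: "0 < hy L j" by (rule hy_pos[OF L])
  have shift: "(snd w + hy L j) / hy L j = snd w / hy L j + 1" using hy by (simp add: field_simps)
  have "fst w = fst y" using cases by auto
  then have "real_of_int (4 * k' + r') * hx j = real_of_int (4 * k + r) * hx j"
    using w y unfolding mem_vertical_cell_iff[OF L] by simp
  then have "real_of_int (4 * k + r) = real_of_int (4 * k' + r')" using hx_pos[of j] by simp
  then have "r' = r" using column_index_eq[OF _ r r'] by (simp only: of_int_eq_iff)
  with w have w': "real_of_int (3 * l' + r - 1) \<le> snd w / hy L j" "snd w / hy L j \<le> real_of_int (3 * l' + r)"
    unfolding mem_vertical_cell_iff[OF L] by simp_all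
  from y have y': "real_of_int (3 * l + r - 1) \<le> snd y / hy L j" "snd y / hy L j \<le> real_of_int (3 * l + r + 1)"
    unfolding mem_vertical_cell_iff[OF L] by simp_all
  from cases show ?thesis
  proof
    assume yw: "y = w \<and> z = w + ?v"
    then have "3 * l + r - 1 \<le> 3 * l' + r" "3 * l' + r - 1 \<le> 3 * l + r + 1"
      using w' y' by (auto intro: int_le_if_between)
    then have "l' = l" by linarith
    then show ?thesis using yw y w' shift unfolding mem_vertical_cell_iff[OF L] by simp
  next
    assume zw: "z = w \<and> y = w + ?v"
    then have "3 * l + r - 1 \<le> 3 * l' + r + 1" "3 * l' + r \<le> 3 * l + r + 1"
      using w' y' shift by (auto intro: int_le_if_between)
    then have "l' = l" by linarith
    then show ?thesis using zw y w w' unfolding mem_vertical_cell_iff[OF L] by simp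
  qed
qed

lemma prev_level_nontrivial_class:
  assumes L: "0 < L" and "u \<in> push (Phi_pow L (j - 1)) (R_base L) `` {p}" "u \<noteq> p"
  obtains k l r where "r \<in> {1, 2, 3}"
    "push (Phi_pow L (j - 1)) (R_base L) `` {p} \<subseteq> cell L j (4 * k + r) (3 * l + r - 1) 0 2"
proof -
  define G where "G = push (Phi_pow L (j - 1)) (R_gen L)"
  have in_class: "push (Phi_pow L (j - 1)) (R_base L) `` {p} \<subseteq> eqgen G `` {p}"
    unfolding G_def R_base_def using push_eqgen_subset by blast
  with assms(2) have "(p, u) \<in> (G \<union> G\<inverse>)\<^sup>*" by (auto simp: eqgen_def)
  with assms(3) obtain z where "(p, z) \<in> G \<union> G\<inverse>" by (blast elim: converse_rtranclE)
  then obtain w k l r where r: "r \<in> {1, 2, 3}" and w: "w \<in> cell L j (4 * k + r) (3 * l + r - 1) 0 1"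
    and "p = w \<or> p = w + (0, hy L j)"
    unfolding G_def push_Phi_pow_prev_R_gen[OF L] by blast
  then have "p \<in> cell L j (4 * k + r) (3 * l + r - 1) 0 2"
    using hy_pos[OF L, of j] unfolding mem_vertical_cell_iff[OF L] by (auto simp: field_simps)
  then have "eqgen G `` {p} \<subseteq> cell L j (4 * k + r) (3 * l + r - 1) 0 2"
    by (rule eqgen_Image_subset_if_closed) (use prev_move_preserves_segment[OF L r] G_def in blast)
  with in_class r that show thesis by blast
qed

lemma cell_column_not_in_prev_grid:
  assumes "r \<in> {1, 2, 3}" "q \<in> cell L j (4 * k + r) C 0 N"
  shows "fst q \<in> gridX j - gridX (j - 1)"
proof -
  have q: "fst q = real_of_int (4 * k + r) * hx j" using assms(2) by (auto simp: cell_def mem_Times_iff)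
  have "real_of_int (4 * k + r) * hx j \<noteq> real_of_int a * hx (j - 1)" for a
  proof
    assume "real_of_int (4 * k + r) * hx j = real_of_int a * hx (j - 1)"
    then have "real_of_int (4 * k + r) = real_of_int (4 * a)"
      using hx_level[of "j - 1" j] hx_pos[of j] by simp
    then have "4 * k + r = 4 * a" by (simp only: of_int_eq_iff)
    with assms(1)[simplified] show False by presburger
  qed
  then have "fst q \<notin> gridX (j - 1)" using q by (auto simp: gridX_def)
  moreover have "fst q \<in> gridX j" using q unfolding gridX_def by blast
  ultimately show ?thesis by blast
qed

lemma prev_level_nontrivial_class_in_vpath:
  assumes L: "0 < L" and "\<exists>q \<in> push (Phi_pow L (j - 1)) (R_base L) `` {p}. q \<noteq> p"
  shows "push (Phi_pow L (j - 1)) (R_base L) `` {p} \<subseteq> {z. fst z \<in> gridX j - gridX (j - 1)} \<and>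
    (\<forall>u \<in> push (Phi_pow L (j - 1)) (R_base L) `` {p}. \<forall>w \<in> push (Phi_pow L (j - 1)) (R_base L) `` {p}.
      \<exists>vs. vpath vs \<and> length vs - 1 \<le> 2 \<and> u \<in> vpath_set L j vs \<and> w \<in> vpath_set L j vs)"
proof -
  from assms(2) obtain u where "u \<in> push (Phi_pow L (j - 1)) (R_base L) `` {p}" "u \<noteq> p" ..
  then obtain k l r where r: "r \<in> {1, 2, 3}"
    and seg: "push (Phi_pow L (j - 1)) (R_base L) `` {p} \<subseteq> cell L j (4 * k + r) (3 * l + r - 1) 0 2"
    by (rule prev_level_nontrivial_class[OF L])
  define vs where "vs = [(4 * k + r, 3 * l + r - 1), (4 * k + r, 3 * l + r - 1 + 1), (4 * k + r, 3 * l + r - 1 + 2)]"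
  have "vpath vs" "length vs - 1 \<le> 2" by (simp_all add: vs_def vpath_def)
  moreover have "push (Phi_pow L (j - 1)) (R_base L) `` {p} \<subseteq> vpath_set L j vs"
    using seg vertical_cell_subset_vpath_set[OF L] unfolding vs_def by (rule order_trans)
  moreover have "push (Phi_pow L (j - 1)) (R_base L) `` {p} \<subseteq> {z. fst z \<in> gridX j - gridX (j - 1)}"
    using seg cell_column_not_in_prev_grid[OF r] by auto
  ultimately show ?thesis by auto
qed

lemma in_trans_lat: "(real_of_int a * hx j, real_of_int b * hy L j) \<in> trans_lat L j"
  unfolding trans_lat_def by blast

lemma trans_lat_add:
  assumes "s \<in> trans_lat L j" "t \<in> trans_lat L j"
  shows "s + t \<in> trans_lat L j"
proof -
  from assms obtain a b c d where
    "s = (real_of_int a * hx j, real_of_int b * hy L j)" "t = (real_of_int c * hx j, real_of_int d * hy L j)"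
    by (auto simp: trans_lat_def)
  then have "s + t = (real_of_int (a + c) * hx j, real_of_int (b + d) * hy L j)"
    by (simp add: algebra_simps)
  then show ?thesis by (simp only: in_trans_lat)
qed

lemma trans_lat_uminus:
  assumes "t \<in> trans_lat L j"
  shows "- t \<in> trans_lat L j"
proof -
  from assms obtain c d where "t = (real_of_int c * hx j, real_of_int d * hy L j)"
    by (auto simp: trans_lat_def)
  then have "- t = (real_of_int (- c) * hx j, real_of_int (- d) * hy L j)" by simp
  then show ?thesis by (simp only: in_trans_lat)
qed

lemma zero_in_trans_lat: "0 \<in> trans_lat L j"
  using in_trans_lat[of 0 j 0 L] by (simp add: zero_prod_def)

lemma R_lev_Image_subset_translates:
  assumes "0 < L"
  shows "R_lev L j `` {p} \<subseteq> (\<lambda>t. p + t) ` trans_lat L j"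
proof
  have moves: "R_lev_moves L j \<subseteq> {(p, q). q - p \<in> trans_lat L j}"
  proof (rule subrelI)
    fix y z assume "(y, z) \<in> R_lev_moves L j"
    then obtain N where "z = y + (0, real_of_int N * hy L j)"
      using R_lev_moves_vertical[OF assms] by blast
    then have "z - y = (real_of_int 0 * hx j, real_of_int N * hy L j)" by simp
    then show "(y, z) \<in> {(p, q). q - p \<in> trans_lat L j}" by (simp only: in_trans_lat mem_Collect_eq case_prod_conv)
  qed
  have "R_lev L j \<subseteq> {(p, q). q - p \<in> trans_lat L j}"
    unfolding R_lev_eq_eqgen_moves
    by (rule eqgen_subset_difference_in_subgroup[OF moves zero_in_trans_lat trans_lat_add trans_lat_uminus])
  moreover fix q assume "q \<in> R_lev L j `` {p}"
  ultimately have "q - p \<in> trans_lat L j" by auto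
  then show "q \<in> (\<lambda>t. p + t) ` trans_lat L j" by (rule rev_image_eqI) simp
qed

lemma pi_map_fibres:
  "let Rb = eqgen {(hatpi L j (Phi_pow L j p), hatpi L j (Phi_pow L j q)) | p q. (p, q) \<in> R_base L}
   in {Rb `` {c} | c. c \<in> X L j} = {{c \<in> X L j. pi_map L j c = z} | z. z \<in> X L (j + 1)}"
proof -
  define S where "S = (\<Union>i\<in>{i. i < j}. push (Phi_pow L i) (R_base L))"
  define T where "T = push (Phi_pow L j) (R_base L)"
  have R_j: "R_lev L j = eqgen S"
    unfolding R_lev_def S_def ..
  have "{i. i < j + 1} = insert j {i. i < j}" by auto
  then have R_Suc_j: "R_lev L (j + 1) = eqgen (S \<union> T)"
    unfolding R_lev_def S_def T_def by (simp add: Un_commute)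
  have "{(hatpi L j (Phi_pow L j p), hatpi L j (Phi_pow L j q)) | p q. (p, q) \<in> R_base L} =
      {(eqgen S `` {x}, eqgen S `` {y}) | x y. (x, y) \<in> T}"
    unfolding hatpi_def R_j T_def push_def by blast
  then show ?thesis
    unfolding Let_def X_def pi_map_def R_j R_Suc_j by (rule ssubst) (rule eqgen_quotient_classes_eq_fibres[OF refl refl])
qed

section \<open>Translation of cells along R_j\<close>

lemma R_lev_step_translates_cell:
  assumes "0 < L" "dx \<in> {0, 1}" "dy \<in> {0, 1}" "y \<in> rel_interior (cell L j a b dx dy)"
    and "(y, z) \<in> R_lev_moves L j \<union> (R_lev_moves L j)\<inverse>"
  obtains m where "z = y + (0, real_of_int m * hy L j)"
    "\<And>q. q \<in> cell L j a b dx dy \<Longrightarrow> (q, q + (0, real_of_int m * hy L j)) \<in> R_lev L j"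
  using assms(5)
proof
  assume "(y, z) \<in> R_lev_moves L j"
  then obtain A C N where "y \<in> cell L j A C 0 N" "z = y + (0, real_of_int N * hy L j)"
    and moves: "\<forall>q \<in> cell L j A C 0 N. (q, q + (0, real_of_int N * hy L j)) \<in> R_lev_moves L j"
    using R_lev_moves_vertical[OF assms(1)] by blast
  moreover have "cell L j a b dx dy \<subseteq> cell L j A C 0 N"
    by (rule cell_subset_if_rel_interior[OF assms(1-4)]) fact
  ultimately show thesis using that R_lev_moves_subset by blast
next
  assume "(y, z) \<in> (R_lev_moves L j)\<inverse>"
  then obtain A C N where z: "z \<in> cell L j A C 0 N" and y: "y = z + (0, real_of_int N * hy L j)"
    and moves: "\<forall>q \<in> cell L j A C 0 N. (q, q + (0, real_of_int N * hy L j)) \<in> R_lev_moves L j"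
    using R_lev_moves_vertical[OF assms(1)] by blast
  have shifted: "cell L j A (C + N) 0 N = (\<lambda>q. (0, real_of_int N * hy L j) + q) ` cell L j A C 0 N"
    using cell_translate[of 0 j N L A C 0 N] by simp
  have "cell L j a b dx dy \<subseteq> cell L j A (C + N) 0 N"
    by (rule cell_subset_if_rel_interior[OF assms(1-4)]) (use z y shifted in \<open>auto simp: add.commute\<close>)
  moreover have "(q, q + (0, real_of_int (- N) * hy L j)) \<in> R_lev L j" if "q \<in> cell L j A (C + N) 0 N" for q
  proof -
    from that obtain q' where "q' \<in> cell L j A C 0 N" and q: "q = (0, real_of_int N * hy L j) + q'"
      unfolding shifted by blast
    then have "(q', q) \<in> R_lev L j" using moves R_lev_moves_subset by (auto simp: add.commute)
    then have "(q, q') \<in> R_lev L j" by (rule R_lev_sym)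
    moreover have "q' = q + (0, real_of_int (- N) * hy L j)" using q by (simp add: prod_eq_iff)
    ultimately show ?thesis by simp
  qed
  moreover have "z = y + (0, real_of_int (- N) * hy L j)" using y by (simp add: prod_eq_iff)
  ultimately show thesis using that by blast
qed

lemma R_lev_translates_cells:
  assumes L: "0 < L" and "\<sigma>0 \<in> cells L j" "\<sigma>1 \<in> cells L j"
    and p0: "p0 \<in> rel_interior \<sigma>0" and p1: "p1 \<in> rel_interior \<sigma>1" and "(p0, p1) \<in> R_lev L j"
  shows "\<exists>t \<in> trans_lat L j. (\<lambda>q. t + q) ` \<sigma>0 = \<sigma>1 \<and> (\<forall>q \<in> \<sigma>0. (q, t + q) \<in> R_lev L j)"
proof -
  obtain a b dx dy where \<sigma>0: "\<sigma>0 = cell L j a b dx dy" and d: "dx \<in> {0, 1}" "dy \<in> {0, 1}"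
    using \<open>\<sigma>0 \<in> cells L j\<close> by (auto simp: cells_def)
  obtain a' b' dx' dy' where \<sigma>1: "\<sigma>1 = cell L j a' b' dx' dy'" and d': "dx' \<in> {0, 1}" "dy' \<in> {0, 1}"
    using \<open>\<sigma>1 \<in> cells L j\<close> by (auto simp: cells_def)
  have "(p0, p1) \<in> (R_lev_moves L j \<union> (R_lev_moves L j)\<inverse>)\<^sup>*"
    using \<open>(p0, p1) \<in> R_lev L j\<close> by (simp add: R_lev_eq_eqgen_moves eqgen_def)
  then have "\<exists>n m. p1 \<in> rel_interior (cell L j (a + n) (b + m) dx dy) \<and>
      (\<forall>q \<in> \<sigma>0. (q, (real_of_int n * hx j, real_of_int m * hy L j) + q) \<in> R_lev L j)"
  proof (induction rule: rtrancl_induct)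
    case base
    show ?case using p0 \<sigma>0 R_lev_refl by (intro exI[of _ 0]) (simp add: zero_prod_def[symmetric])
  next
    case (step y z)
    then obtain n m where y: "y \<in> rel_interior (cell L j (a + n) (b + m) dx dy)"
      and R: "\<forall>q \<in> \<sigma>0. (q, (real_of_int n * hx j, real_of_int m * hy L j) + q) \<in> R_lev L j"
      by blast
    obtain m' where z: "z = y + (0, real_of_int m' * hy L j)"
      and R': "\<And>q. q \<in> cell L j (a + n) (b + m) dx dy \<Longrightarrow> (q, q + (0, real_of_int m' * hy L j)) \<in> R_lev L j"
      using R_lev_step_translates_cell[OF L d y step(2)] by blast
    have zt: "z = (real_of_int 0 * hx j, real_of_int m' * hy L j) + y"
      using z by (simp add: add.commute)
    have "z \<in> rel_interior (cell L j (a + n + 0) (b + m + m') dx dy)"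
      unfolding zt by (rule rel_interior_cell_translate[OF y])
    then have "z \<in> rel_interior (cell L j (a + n) (b + (m + m')) dx dy)"
      by (simp only: add_0_right add.assoc)
    moreover have "(q, (real_of_int n * hx j, real_of_int (m + m') * hy L j) + q) \<in> R_lev L j" if "q \<in> \<sigma>0" for q
    proof -
      let ?t = "(real_of_int n * hx j, real_of_int m * hy L j)"
      have "?t + q \<in> cell L j (a + n) (b + m) dx dy"
        using that unfolding \<sigma>0 cell_translate[symmetric] by blast
      then have "(?t + q, ?t + q + (0, real_of_int m' * hy L j)) \<in> R_lev L j" by (rule R')
      with R that have "(q, ?t + q + (0, real_of_int m' * hy L j)) \<in> R_lev L j"
        by (blast intro: R_lev_trans)
      moreover have "?t + q + (0, real_of_int m' * hy L j) = (real_of_int n * hx j, real_of_int (m + m') * hy L j) + q"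
        by (simp add: algebra_simps)
      ultimately show ?thesis by simp
    qed
    ultimately show ?case by blast
  qed
  then obtain n m where p1': "p1 \<in> rel_interior (cell L j (a + n) (b + m) dx dy)"
    and R: "\<forall>q \<in> \<sigma>0. (q, (real_of_int n * hx j, real_of_int m * hy L j) + q) \<in> R_lev L j"
    by blast
  have "(\<lambda>q. (real_of_int n * hx j, real_of_int m * hy L j) + q) ` \<sigma>0 = \<sigma>1"
    unfolding \<sigma>0 \<sigma>1 cell_translate using cell_eq_if_rel_interior[OF L d d' p1' p1[unfolded \<sigma>1]] .
  with R show ?thesis by (intro bexI[OF _ in_trans_lat] conjI)
qed

theorem mainTheorem2:
  fixes L j :: int
  assumes "L \<ge> 100"
  shows
   "(\<forall>p. (\<exists>q \<in> push (Phi_pow L (j - 1)) (R_base L) `` {p}. q \<noteq> p) \<longrightarrow>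
        (push (Phi_pow L (j - 1)) (R_base L) `` {p} \<subseteq> {z. fst z \<in> gridX j - gridX (j - 1)} \<and>
         (\<forall>u \<in> push (Phi_pow L (j - 1)) (R_base L) `` {p}.
          \<forall>w \<in> push (Phi_pow L (j - 1)) (R_base L) `` {p}.
            \<exists>vs. vpath vs \<and> length vs - 1 \<le> 2 \<and> u \<in> vpath_set L j vs \<and> w \<in> vpath_set L j vs)))
    \<and> (\<forall>p. \<exists>p'. R_lev L j `` {p} \<subseteq> (\<lambda>t. p' + t) ` trans_lat L j)
    \<and> (let Rb = eqgen {(hatpi L j (Phi_pow L j p), hatpi L j (Phi_pow L j q)) | p q. (p, q) \<in> R_base L}
       in {Rb `` {c} | c. c \<in> X L j} = {{c \<in> X L j. pi_map L j c = z} | z. z \<in> X L (j + 1)})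
    \<and> (\<forall>\<sigma>0 \<sigma>1 p0 p1. \<sigma>0 \<in> cells L j \<longrightarrow> \<sigma>1 \<in> cells L j \<longrightarrow>
          p0 \<in> rel_interior \<sigma>0 \<longrightarrow> p1 \<in> rel_interior \<sigma>1 \<longrightarrow> (p0, p1) \<in> R_lev L j \<longrightarrow>
          (\<exists>t \<in> trans_lat L j. (\<lambda>q. t + q) ` \<sigma>0 = \<sigma>1 \<and> (\<forall>q \<in> \<sigma>0. (q, t + q) \<in> R_lev L j)))"
proof -
  have L: "0 < L" using assms by simp
  show ?thesis
    using prev_level_nontrivial_class_in_vpath[OF L] R_lev_Image_subset_translates[OF L] pi_map_fibres[of L j]
      R_lev_translates_cells[OF L] by (intro conjI allI impI exI) simp_all
qed

end
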